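(* Let $M$ and $k$ be fixed nonnegative integers, and let $\Phi$ be an open formula of $\mathcal{L}_{\mathrm{Ab}}$ with $n$ variables such that every term occurring in $\Phi$ has depth at most $k$. Then for any $a_1,\dots,a_n\in[-2^M,2^M]$, $$\mathbf{R}\models\Phi(a_1,\dots,a_n)\quad\text{iff}\quad [0,1]_{\text{\L}}[\tfrac12]\models\tau'(\Phi)(r_{M,k}(a_1),\dots,r_{M,k}(a_n)).$$ Equivalently, for any $b_1,\dots,b_n\in\left[\tfrac12-\tfrac1{2^{k+1}},\tfrac12+\tfrac1{2^{k+1}}\right]$, $$[0,1]_{\text{\L}}[\tfrac12]\models\tau'(\Phi)(b_1,\dots,b_n)\quad\text{iff}\quad \mathbf{R}\models\Phi(r_{M,k}^{-1}(b_1),\dots,r_{M,k}^{-1}(b_n)).$$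
   Context: $\mathcal{L}_{\mathrm{Ab}}=\langle +,-,0,\wedge,\vee\rangle$; $\mathbf{R}=\langle\mathbb{R},+,-,\wedge,\vee,0\rangle$ is the ordered additive group of reals with $\wedge=\min$, $\vee=\max$. Open formulas are finite Boolean combinations (negation, conjunction, disjunction) of atoms $\phi=\psi$. $[0,1]_{\text{\L}}[\tfrac12]$ has domain $[0,1]$ with $\neg a=1-a$, $a\otimes b=\max(0,a+b-1)$, $a\oplus b=\min(1,a+b)$, $a\to b=\min(1,1-a+b)$, $\wedge=\min$, $\vee=\max$, and constants $0,1,\tfrac12$. Depth of terms: variables and constants have depth $0$, $\mathrm{depth}(-\phi)=\mathrm{depth}(\phi)+1$, $\mathrm{depth}(\phi\circ\psi)=\max(\mathrm{depth}(\phi),\mathrm{depth}(\psi))+1$ for $\circ\in\{+,\wedge,\vee\}$. The term translation $\tau$: $\tau(x)=x$ for variables; $\tau(0)=\tfrac12$; $\tau(-\phi)=\neg\tau(\phi)$; $\tau(\phi+\psi)=(\tau(\phi)\oplus\tau(\psi))\otimes(\tfrac12\oplus(\tau(\phi)\otimes\tau(\psi)))$; $\tau(\phi\vee\psi)=\tau(\phi)\vee\tau(\psi)$; $\tau(\phi\wedge\psi)=\tau(\phi)\wedge\tau(\psi)$. For an open formula $\Phi$, $\tau'(\Phi)$ is obtained by replacing each atom $\phi=\psi$ by $\tau(\phi)=\tau(\psi)$, leaving the Boolean structure unchanged. $r_{M,k}(a)=\frac{a}{2^{M+k+1}}+\frac12$, a bijection from $[-2^M,2^M]$ onto $[\tfrac12-\tfrac1{2^{k+1}},\tfrac12+\tfrac1{2^{k+1}}]$.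 *)

theory Defs
  imports Complex_Main
begin

datatype ab_term = AVar nat | AZero | ANeg ab_term | AAdd ab_term ab_term
  | AMeet ab_term ab_term | AJoin ab_term ab_term

datatype 'a ofml = Atom 'a 'a | FNot "'a ofml" | FAnd "'a ofml" "'a ofml"
  | FOr "'a ofml" "'a ofml"

fun ab_depth :: "ab_term \<Rightarrow> nat" where
  "ab_depth (AVar i) = 0"
| "ab_depth AZero = 0"
| "ab_depth (ANeg t) = ab_depth t + 1"
| "ab_depth (AAdd s t) = max (ab_depth s) (ab_depth t) + 1"
| "ab_depth (AMeet s t) = max (ab_depth s) (ab_depth t) + 1"
| "ab_depth (AJoin s t) = max (ab_depth s) (ab_depth t) + 1"

fun ab_vars :: "ab_term \<Rightarrow> nat set" where
  "ab_vars (AVar i) = {i}"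
| "ab_vars AZero = {}"
| "ab_vars (ANeg t) = ab_vars t"
| "ab_vars (AAdd s t) = ab_vars s \<union> ab_vars t"
| "ab_vars (AMeet s t) = ab_vars s \<union> ab_vars t"
| "ab_vars (AJoin s t) = ab_vars s \<union> ab_vars t"

fun ab_eval :: "(nat \<Rightarrow> real) \<Rightarrow> ab_term \<Rightarrow> real" where
  "ab_eval v (AVar i) = v i"
| "ab_eval v AZero = 0"
| "ab_eval v (ANeg t) = - ab_eval v t"
| "ab_eval v (AAdd s t) = ab_eval v s + ab_eval v t"
| "ab_eval v (AMeet s t) = min (ab_eval v s) (ab_eval v t)"
| "ab_eval v (AJoin s t) = max (ab_eval v s) (ab_eval v t)"

fun fml_terms :: "'a ofml \<Rightarrow> 'a set" where
  "fml_terms (Atom s t) = {s, t}"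
| "fml_terms (FNot p) = fml_terms p"
| "fml_terms (FAnd p q) = fml_terms p \<union> fml_terms q"
| "fml_terms (FOr p q) = fml_terms p \<union> fml_terms q"

fun fml_sat :: "('a \<Rightarrow> 'b) \<Rightarrow> 'a ofml \<Rightarrow> bool" where
  "fml_sat ev (Atom s t) = (ev s = ev t)"
| "fml_sat ev (FNot p) = (\<not> fml_sat ev p)"
| "fml_sat ev (FAnd p q) = (fml_sat ev p \<and> fml_sat ev q)"
| "fml_sat ev (FOr p q) = (fml_sat ev p \<or> fml_sat ev q)"

fun fml_map :: "('a \<Rightarrow> 'b) \<Rightarrow> 'a ofml \<Rightarrow> 'b ofml" where
  "fml_map f (Atom s t) = Atom (f s) (f t)"
| "fml_map f (FNot p) = FNot (fml_map f p)"
| "fml_map f (FAnd p q) = FAnd (fml_map f p) (fml_map f q)"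
| "fml_map f (FOr p q) = FOr (fml_map f p) (fml_map f q)"

datatype mv_term = MVar nat | MZero | MOne | MHalf | MNeg mv_term
  | MOtimes mv_term mv_term | MOplus mv_term mv_term | MImp mv_term mv_term
  | MMin mv_term mv_term | MMax mv_term mv_term

fun mv_eval :: "(nat \<Rightarrow> real) \<Rightarrow> mv_term \<Rightarrow> real" where
  "mv_eval v (MVar i) = v i"
| "mv_eval v MZero = 0"
| "mv_eval v MOne = 1"
| "mv_eval v MHalf = 1/2"
| "mv_eval v (MNeg t) = 1 - mv_eval v t"
| "mv_eval v (MOtimes s t) = max 0 (mv_eval v s + mv_eval v t - 1)"
| "mv_eval v (MOplus s t) = min 1 (mv_eval v s + mv_eval v t)"
| "mv_eval v (MImp s t) = min 1 (1 - mv_eval v s + mv_eval v t)"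
| "mv_eval v (MMin s t) = min (mv_eval v s) (mv_eval v t)"
| "mv_eval v (MMax s t) = max (mv_eval v s) (mv_eval v t)"

fun tau :: "ab_term \<Rightarrow> mv_term" where
  "tau (AVar i) = MVar i"
| "tau AZero = MHalf"
| "tau (ANeg t) = MNeg (tau t)"
| "tau (AAdd s t) = MOtimes (MOplus (tau s) (tau t)) (MOplus MHalf (MOtimes (tau s) (tau t)))"
| "tau (AJoin s t) = MMax (tau s) (tau t)"
| "tau (AMeet s t) = MMin (tau s) (tau t)"

definition tau' :: "ab_term ofml \<Rightarrow> mv_term ofml" where
  "tau' \<Phi> = fml_map tau \<Phi>"

definition r_Mk :: "nat \<Rightarrow> nat \<Rightarrow> real \<Rightarrow> real" where
  "r_Mk M k a = a / 2 ^ (M + k + 1) + 1/2"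

end

theory Submission
  imports Defs
begin

text \<open>The affine map \<open>r_Mk M k\<close> is an order isomorphism of the reals sending \<open>0\<close> to \<open>1/2\<close>;
  it intertwines negation with \<open>x \<mapsto> 1 - x\<close>, min/max with min/max, and addition with
  \<open>(x, y) \<mapsto> x + y - 1/2\<close>. The Lukasiewicz term \<open>\<tau>(s + t)\<close> computes exactly \<open>x + y - 1/2\<close>
  as long as \<open>|x + y - 1| \<le> 1/2\<close>. A term of depth \<open>d\<close> with arguments in \<open>[-2^M, 2^M]\<close> has
  its value in \<open>[-2^(M+d), 2^(M+d)]\<close>, so after scaling by \<open>2^(M+k+1)\<close> every sum formed inside
  a term of depth at most \<open>k\<close> stays in that region. Hence \<open>r_Mk M k\<close> commutes with the
  evaluation of such terms, and being injective it preserves and reflects every atom.\<close>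

lemma r_Mk_neg: "1 - r_Mk M k a = r_Mk M k (- a)"
  by (simp add: r_Mk_def)

lemma r_Mk_add: "r_Mk M k a + r_Mk M k b - 1/2 = r_Mk M k (a + b)"
  by (simp add: r_Mk_def add_divide_distrib)

lemma mono_r_Mk: "mono (r_Mk M k)"
  by (rule monoI) (simp add: r_Mk_def divide_right_mono)

lemma inj_r_Mk: "inj (r_Mk M k)"
  by (rule injI) (simp add: r_Mk_def)

lemma r_Mk_image_interval:
  "r_Mk M k ` {- (2 ^ M) .. 2 ^ M} = {1/2 - 1 / 2 ^ (k + 1) .. 1/2 + 1 / 2 ^ (k + 1)}"
proof -
  let ?c = "(1::real) / 2 ^ (M + k + 1)"
  have scale: "?c * 2 ^ M = 1 / 2 ^ (k + 1)"
    by (simp add: power_add)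
  have affine: "r_Mk M k = (\<lambda>a. ?c * a + 1/2)"
    by (simp add: r_Mk_def fun_eq_iff)
  show ?thesis
    unfolding affine image_affinity_atLeastAtMost using scale by simp
qed

lemma lukasiewicz_tau_add:
  fixes x y :: real
  assumes "\<bar>x + y - 1\<bar> \<le> 1/2"
  shows "max 0 (min 1 (x + y) + min 1 (1/2 + max 0 (x + y - 1)) - 1) = x + y - 1/2"
  using assms by (auto simp: max_def min_def abs_if)

lemma abs_ab_eval_le:
  fixes B :: real
  assumes "0 \<le> B" and "\<forall>i \<in> ab_vars t. \<bar>a i\<bar> \<le> B"
  shows "\<bar>ab_eval a t\<bar> \<le> B * 2 ^ ab_depth t"
proof -
  have binary: "\<bar>x\<bar> + \<bar>y\<bar> \<le> B * 2 ^ (max d e + 1)"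
    if "\<bar>x\<bar> \<le> B * 2 ^ d" "\<bar>y\<bar> \<le> B * 2 ^ e" for x y :: real and d e :: nat
  proof -
    have "B * 2 ^ d \<le> B * 2 ^ max d e" "B * 2 ^ e \<le> B * 2 ^ max d e"
      by (simp_all add: assms(1) mult_left_mono)
    then show ?thesis using that by simp
  qed
  show ?thesis
    using assms(2)
  proof (induction t)
    case (AAdd s t)
    then show ?case
      using binary[of "ab_eval a s" "ab_depth s" "ab_eval a t" "ab_depth t"]
        abs_triangle_ineq[of "ab_eval a s" "ab_eval a t"] by simp
  next
    case (AMeet s t)
    then show ?case
      using binary[of "ab_eval a s" "ab_depth s" "ab_eval a t" "ab_depth t"] by (auto simp: min_def)
  next
    case (AJoin s t)
    then show ?case
      using binary[of "ab_eval a s" "ab_depth s" "ab_eval a t" "ab_depth t"] by (auto simp: max_def)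
  qed (use assms(1) in auto)
qed

lemma mv_eval_tau:
  assumes "\<forall>i \<in> ab_vars t. \<bar>a i\<bar> \<le> 2 ^ M \<and> v i = r_Mk M k (a i)" and "ab_depth t \<le> k"
  shows "mv_eval v (tau t) = r_Mk M k (ab_eval a t)"
  using assms
proof (induction t)
  case (ANeg t)
  then show ?case by (simp add: r_Mk_neg)
next
  case (AAdd s t)
  let ?x = "r_Mk M k (ab_eval a s)" and ?y = "r_Mk M k (ab_eval a t)"
  have IH: "mv_eval v (tau s) = ?x" "mv_eval v (tau t) = ?y"
    using AAdd by auto
  have half_bound: "2 * \<bar>ab_eval a u\<bar> \<le> 2 ^ (M + k)"
    if "u \<in> {s, t}" for u
  proof -
    have "ab_depth u + 1 \<le> k" "\<forall>i \<in> ab_vars u. \<bar>a i\<bar> \<le> 2 ^ M"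
      using that AAdd.prems by auto
    then have "2 * \<bar>ab_eval a u\<bar> \<le> 2 ^ (M + (ab_depth u + 1))"
      using abs_ab_eval_le[of "2 ^ M" u a] by (simp add: power_add)
    also have "\<dots> \<le> 2 ^ (M + k)"
      using \<open>ab_depth u + 1 \<le> k\<close> by (intro power_increasing) simp_all
    finally show ?thesis .
  qed
  have "\<bar>ab_eval a s + ab_eval a t\<bar> \<le> 2 ^ (M + k)"
    using half_bound[of s] half_bound[of t] by simp
  then have "\<bar>?x + ?y - 1\<bar> \<le> 1/2"
    by (simp add: r_Mk_def add_divide_distrib[symmetric] field_simps)
  have "mv_eval v (tau (AAdd s t))
      = max 0 (min 1 (?x + ?y) + min 1 (1/2 + max 0 (?x + ?y - 1)) - 1)"
    by (simp only: tau.simps mv_eval.simps IH)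
  also have "\<dots> = ?x + ?y - 1/2"
    by (rule lukasiewicz_tau_add) fact
  also have "\<dots> = r_Mk M k (ab_eval a (AAdd s t))"
    by (simp add: r_Mk_add)
  finally show ?case .
next
  case (AMeet s t)
  then show ?case by (simp add: min_of_mono[OF mono_r_Mk])
next
  case (AJoin s t)
  then show ?case by (simp add: max_of_mono[OF mono_r_Mk])
qed (simp_all add: r_Mk_def)

lemma fml_sat_fml_map:
  assumes "inj g" and "\<forall>t \<in> fml_terms \<Phi>. ev' (f t) = g (ev t)"
  shows "fml_sat ev' (fml_map f \<Phi>) \<longleftrightarrow> fml_sat ev \<Phi>"
  using assms(2) by (induction \<Phi>) (auto simp: inj_eq[OF assms(1)])

lemma fml_sat_tau':
  assumes "\<forall>t \<in> fml_terms \<Phi>. ab_vars t \<subseteq> {..<n}" and "\<forall>t \<in> fml_terms \<Phi>. ab_depth t \<le> k"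
    and "\<forall>i<n. \<bar>a i\<bar> \<le> 2 ^ M \<and> v i = r_Mk M k (a i)"
  shows "fml_sat (mv_eval v) (tau' \<Phi>) \<longleftrightarrow> fml_sat (ab_eval a) \<Phi>"
  unfolding tau'_def
proof (rule fml_sat_fml_map[OF inj_r_Mk], intro ballI)
  fix t assume "t \<in> fml_terms \<Phi>"
  with assms show "mv_eval v (tau t) = r_Mk M k (ab_eval a t)"
    by (intro mv_eval_tau) auto
qed

theorem mainTheorem5:
  fixes M k n :: nat and \<Phi> :: "ab_term ofml"
  assumes vars: "\<forall>t \<in> fml_terms \<Phi>. ab_vars t \<subseteq> {..<n}"
    and depth: "\<forall>t \<in> fml_terms \<Phi>. ab_depth t \<le> k"
  shows "(\<forall>a :: nat \<Rightarrow> real. (\<forall>i<n. a i \<in> {- (2 ^ M) .. 2 ^ M}) \<longrightarrow>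
            (fml_sat (ab_eval a) \<Phi> \<longleftrightarrow>
             fml_sat (mv_eval (\<lambda>i. r_Mk M k (a i))) (tau' \<Phi>)))
       \<and> (\<forall>b :: nat \<Rightarrow> real.
            (\<forall>i<n. b i \<in> {1/2 - 1 / 2 ^ (k + 1) .. 1/2 + 1 / 2 ^ (k + 1)}) \<longrightarrow>
            (fml_sat (mv_eval b) (tau' \<Phi>) \<longleftrightarrow>
             fml_sat (ab_eval (\<lambda>i. inv_into {- (2 ^ M) .. 2 ^ M} (r_Mk M k) (b i))) \<Phi>))"
proof -
  let ?I = "{- (2 ^ M) .. 2 ^ M} :: real set"
  have abs_le: "\<bar>x\<bar> \<le> 2 ^ M" if "x \<in> ?I" for x
    using that by (simp add: abs_le_iff minus_le_iff)
  show ?thesis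
  proof (intro conjI allI impI)
    fix a :: "nat \<Rightarrow> real"
    assume "\<forall>i<n. a i \<in> ?I"
    then have "\<forall>i<n. \<bar>a i\<bar> \<le> 2 ^ M \<and> r_Mk M k (a i) = r_Mk M k (a i)"
      using abs_le by blast
    from fml_sat_tau'[OF vars depth this]
    show "fml_sat (ab_eval a) \<Phi> \<longleftrightarrow> fml_sat (mv_eval (\<lambda>i. r_Mk M k (a i))) (tau' \<Phi>)"
      by (rule sym)
  next
    fix b :: "nat \<Rightarrow> real"
    assume "\<forall>i<n. b i \<in> {1/2 - 1 / 2 ^ (k + 1) .. 1/2 + 1 / 2 ^ (k + 1)}"
    then have "\<forall>i<n. b i \<in> r_Mk M k ` ?I"
      by (simp only: r_Mk_image_interval)
    then have "\<forall>i<n. \<bar>inv_into ?I (r_Mk M k) (b i)\<bar> \<le> 2 ^ M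
        \<and> b i = r_Mk M k (inv_into ?I (r_Mk M k) (b i))"
      using abs_le inv_into_into f_inv_into_f by metis
    then show "fml_sat (mv_eval b) (tau' \<Phi>) \<longleftrightarrow>
        fml_sat (ab_eval (\<lambda>i. inv_into ?I (r_Mk M k) (b i))) \<Phi>"
      by (rule fml_sat_tau'[OF vars depth])
  qed
qed

end
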